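(* Let $n$ be an odd positive integer, and let $\mathcal{C}_i^{(n)}$ denote the $2$-cyclotomic coset of $i$ modulo $n$. Let $i,j$ with $0\le i<j\le n-1$ be integers not belonging to the same cyclotomic coset modulo $n$. Let $g$ be a positive integer with $(2^g-1)\mid n$. Suppose there exists an integer $r$ with $0<r<2^g-1$ and $\gcd(r,2^g-1)=1$ such that both $i$ and $j$ lie in $\mathcal{C}_r^{(2^g-1)}$, i.e. $i\bmod (2^g-1)$ and $j \bmod (2^g-1)$ belong to $\{r2^k \bmod (2^g-1): k\ge 0\}$. Then the binary cyclic code of length $n$ with generator polynomial $M_i(x)\cdot M_j(x)$ has minimum distance $d\le 3$. If moreover $\gcd(n,i,j)=1$, then $d=3$.
   Context: For odd $n$, $\alpha$ denotes a primitive $n$th root of unity in an extension field of $\mathbb{F}_2$. The cyclotomic coset of $r$ modulo $N$ (over $\mathbb{F}_2$) is $\mathcal{C}_r^{(N)}=\{r2^k \bmod N: k=0,1,\dots\}$. $M_i(x)=\prod_{t\in\mathcal{C}_i^{(n)}}(x-\alpha^t)\in\mathbb{F}_2[x]$ is the minimal polynomial of $\alpha^i$. The binary cyclic code with generator polynomial $G(x)\mid x^n-1$ is $\{c(x)\in\mathbb{F}_2[x]/(x^n-1): G(x)\mid c(x)\}$. *)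

theory Defs
  imports "HOL-Computational_Algebra.Polynomial"
begin

definition cyc_coset :: "nat \<Rightarrow> nat \<Rightarrow> nat set" where
  "cyc_coset N r = {r * 2 ^ k mod N | k. True}"

definition prim_root :: "nat \<Rightarrow> 'a::field \<Rightarrow> bool" where
  "prim_root n \<alpha> \<longleftrightarrow> \<alpha> ^ n = 1 \<and> (\<forall>k. 0 < k \<and> k < n \<longrightarrow> \<alpha> ^ k \<noteq> 1)"

definition min_poly :: "nat \<Rightarrow> 'a::field \<Rightarrow> nat \<Rightarrow> 'a poly" where
  "min_poly n \<alpha> i = (\<Prod>t\<in>cyc_coset n i. [:- (\<alpha> ^ t), 1:])"

text \<open>Binary polynomials: all coefficients lie in the prime field {0,1}
  (the field is assumed to have characteristic 2).\<close>
definition binary_poly :: "'a::field poly \<Rightarrow> bool" where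
  "binary_poly c \<longleftrightarrow> (\<forall>k. coeff c k \<in> {0, 1})"

text \<open>Binary cyclic code of length n with generator G: codewords are represented by
  their unique representatives of degree < n in F_2[x]/(x^n - 1).\<close>
definition cyclic_code :: "nat \<Rightarrow> 'a::field poly \<Rightarrow> 'a poly set" where
  "cyclic_code n G = {c. binary_poly c \<and> (c = 0 \<or> degree c < n) \<and> G dvd c}"

definition hweight :: "'a::zero poly \<Rightarrow> nat" where
  "hweight c = card {k. coeff c k \<noteq> 0}"

definition min_dist :: "'a::zero poly set \<Rightarrow> nat" where
  "min_dist C = Inf {hweight c | c. c \<in> C \<and> c \<noteq> 0}"

end

theory Submission
  imports Defs "HOL-Number_Theory.Number_Theory"
begin

(*
  Let m = 2^g - 1, s = n div m and w = alpha^(s r), a primitive m-th root of unity. The element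
  1 + w is nonzero and fixed by x \<mapsto> x^(2^g), so it is an m-th root of unity and hence 1 + w = w^e
  for some e. By the Frobenius identity 1 + x + x^e then vanishes at every w^(2^k), so the
  trinomial 1 + x^s + x^(e s) of weight 3 vanishes at every alpha^t with t mod m in the coset of r;
  this covers all zeros of M_i M_j, giving d \<le> 3.
  Conversely, a codeword x^a + x^b (a < b < n) vanishing at alpha^i and alpha^j forces
  n | (b - a) i and n | (b - a) j, hence n | b - a when gcd(n, i, j) = 1, which is impossible;
  a single monomial never vanishes at alpha^i since alpha \<noteq> 0.
*)

hide_const (open) UnivPoly.coeff UnivPoly.monom

section \<open>Characteristic two and roots of unity\<close>

lemma CHAR_2_power_two_add:
  fixes x y :: "'a::comm_semiring_1"
  assumes "CHAR('a) = 2"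
  shows "(x + y) ^ (2 ^ k) = x ^ (2 ^ k) + y ^ (2 ^ k)"
  by (rule freshmans_dream') (simp_all add: assms)

lemma CHAR_2_add_eq_0_iff:
  fixes x y :: "'a::ring_1"
  assumes "CHAR('a) = 2"
  shows "x + y = 0 \<longleftrightarrow> x = y"
proof -
  have "x + y = 0 \<longleftrightarrow> x = - y"
    by (simp add: eq_neg_iff_add_eq_0)
  then show ?thesis
    by (simp add: uminus_CHAR_2[OF assms])
qed

lemma power_mod_eq_of_power_eq_1:
  fixes x :: "'a::monoid_mult"
  assumes "x ^ n = 1"
  shows "x ^ (k mod n) = x ^ k"
proof -
  have "x ^ k = x ^ (n * (k div n) + k mod n)"
    by simp
  also have "\<dots> = (x ^ n) ^ (k div n) * x ^ (k mod n)"
    by (simp only: power_add power_mult)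
  finally show ?thesis
    using assms by simp
qed

lemma prim_root_iff_dvd:
  assumes "0 < n"
  shows "prim_root n \<alpha> \<longleftrightarrow> (\<forall>k. \<alpha> ^ k = 1 \<longleftrightarrow> n dvd k)"
proof
  assume prim: "prim_root n \<alpha>"
  show "\<forall>k. \<alpha> ^ k = 1 \<longleftrightarrow> n dvd k"
  proof
    fix k
    have "k mod n < n"
      using assms by simp
    then have "\<alpha> ^ (k mod n) = 1 \<longleftrightarrow> k mod n = 0"
      using prim unfolding prim_root_def by (cases "k mod n = 0") simp_all
    then show "\<alpha> ^ k = 1 \<longleftrightarrow> n dvd k"
      using prim power_mod_eq_of_power_eq_1[of \<alpha> n k]
      by (simp add: prim_root_def dvd_eq_mod_eq_0)
  qed
next
  assume dvd: "\<forall>k. \<alpha> ^ k = 1 \<longleftrightarrow> n dvd k"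
  show "prim_root n \<alpha>"
    unfolding prim_root_def
  proof (intro conjI allI impI)
    show "\<alpha> ^ n = 1"
      using dvd by simp
    fix k
    assume "0 < k \<and> k < n"
    then show "\<alpha> ^ k \<noteq> 1"
      using dvd nat_dvd_not_less by simp
  qed
qed

lemma prim_root_nonzero:
  assumes "prim_root n \<alpha>" "0 < n"
  shows "\<alpha> \<noteq> 0"
  using assms unfolding prim_root_def by (metis power_0_left less_not_refl zero_neq_one)

lemma prim_root_power_eq_iff:
  assumes "prim_root n \<alpha>" "0 < n"
  shows "\<alpha> ^ x = \<alpha> ^ y \<longleftrightarrow> [x = y] (mod n)"
proof -
  have pow_eq_1: "\<alpha> ^ k = 1 \<longleftrightarrow> n dvd k" for k
    using prim_root_iff_dvd[of n \<alpha>] assms by simp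
  have *: "\<alpha> ^ x = \<alpha> ^ y \<longleftrightarrow> [x = y] (mod n)" if "x \<le> y" for x y
  proof -
    have "\<alpha> ^ y = \<alpha> ^ x * \<alpha> ^ (y - x)"
      using that by (simp flip: power_add)
    moreover have "\<alpha> ^ x \<noteq> 0"
      using prim_root_nonzero[OF assms] by simp
    ultimately have "\<alpha> ^ x = \<alpha> ^ y \<longleftrightarrow> \<alpha> ^ (y - x) = 1"
      by (metis mult_cancel_left1)
    also have "\<dots> \<longleftrightarrow> [y = x] (mod n)"
      using pow_eq_1 cong_altdef_nat[OF that] by simp
    finally show ?thesis
      by (simp only: cong_sym_eq[of y x])
  qed
  show ?thesis
    using *[of x y] *[of y x] cong_sym_eq[of y x n] nat_le_linear[of x y] by metis
qed

lemma inj_on_prim_root_power: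
  assumes "prim_root n \<alpha>" "0 < n"
  shows "inj_on (\<lambda>k. \<alpha> ^ k) {..<n}"
proof (rule inj_onI)
  fix k l
  assume "k \<in> {..<n}" "l \<in> {..<n}" "\<alpha> ^ k = \<alpha> ^ l"
  then show "k = l"
    by (simp add: prim_root_power_eq_iff[OF assms] cong_def)
qed

lemma prim_root_power:
  assumes "prim_root (m * s) \<alpha>" "0 < m * s"
  shows "prim_root m (\<alpha> ^ s)"
proof -
  have "0 < m" "0 < s"
    using assms(2) by auto
  have "(\<alpha> ^ s) ^ k = 1 \<longleftrightarrow> m dvd k" for k
  proof -
    have "(\<alpha> ^ s) ^ k = 1 \<longleftrightarrow> s * m dvd s * k"
      using prim_root_iff_dvd[of "m * s" \<alpha>] assms by (simp flip: power_mult add: mult.commute[of m])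
    also have "\<dots> \<longleftrightarrow> m dvd k"
      using \<open>0 < s\<close> by simp
    finally show ?thesis .
  qed
  then show ?thesis
    using prim_root_iff_dvd[OF \<open>0 < m\<close>] by blast
qed

lemma prim_root_power_coprime:
  assumes "prim_root m \<beta>" "0 < m" "coprime m r"
  shows "prim_root m (\<beta> ^ r)"
proof -
  have "(\<beta> ^ r) ^ k = 1 \<longleftrightarrow> m dvd k" for k
  proof -
    have "(\<beta> ^ r) ^ k = 1 \<longleftrightarrow> m dvd r * k"
      using prim_root_iff_dvd[of m \<beta>] assms by (simp flip: power_mult)
    also have "\<dots> \<longleftrightarrow> m dvd k"
      using coprime_dvd_mult_right_iff[OF assms(3)] .
    finally show ?thesis .
  qed
  then show ?thesis
    using prim_root_iff_dvd[OF assms(2)] by blast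
qed

lemma root_of_unity_eq_prim_root_power:
  fixes w x :: "'a::field"
  assumes "prim_root m w" "0 < m" "x ^ m = 1"
  shows "\<exists>k<m. x = w ^ k"
proof -
  define p :: "'a poly" where "p = monom 1 m + [:-1:]"
  have "degree p = m"
    using assms(2) by (simp add: p_def degree_add_eq_left degree_monom_eq)
  then have "p \<noteq> 0"
    using assms(2) by auto
  let ?R = "{x. poly p x = 0}"
  let ?S = "(\<lambda>k. w ^ k) ` {..<m}"
  have sub: "?S \<subseteq> ?R"
  proof clarify
    fix k
    have "(w ^ k) ^ m = (w ^ m) ^ k"
      by (simp flip: power_mult add: mult.commute)
    then show "poly p (w ^ k) = 0"
      using assms(1) by (simp add: p_def poly_monom prim_root_def)
  qed
  have "card ?S = m"
    using card_image[OF inj_on_prim_root_power[OF assms(1,2)]] by simp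
  moreover have "card ?R \<le> m"
    using card_poly_roots_bound[OF \<open>p \<noteq> 0\<close>] \<open>degree p = m\<close> by simp
  ultimately have "?S = ?R"
    using card_seteq[OF poly_roots_finite[OF \<open>p \<noteq> 0\<close>] sub] by linarith
  moreover have "x \<in> ?R"
    using assms(3) by (simp add: p_def poly_monom)
  ultimately have "x \<in> ?S"
    by blast
  then show ?thesis
    by blast
qed

section \<open>Cyclotomic cosets\<close>

lemma cyc_coset_subset: "0 < n \<Longrightarrow> cyc_coset n i \<subseteq> {..<n}"
  by (auto simp: cyc_coset_def)

lemma finite_cyc_coset: "0 < n \<Longrightarrow> finite (cyc_coset n i)"
  using cyc_coset_subset finite_subset by blast

lemma self_in_cyc_coset: "i < n \<Longrightarrow> i \<in> cyc_coset n i"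
  unfolding cyc_coset_def by (rule CollectI, rule exI[of _ 0]) simp

lemma cyc_coset_mod_dvd:
  assumes "m dvd n" "i mod m \<in> cyc_coset m r" "t \<in> cyc_coset n i"
  shows "t mod m \<in> cyc_coset m r"
proof -
  obtain a where a: "t = i * 2 ^ a mod n"
    using assms(3) unfolding cyc_coset_def by auto
  obtain k where k: "i mod m = r * 2 ^ k mod m"
    using assms(2) unfolding cyc_coset_def by auto
  have "t mod m = (i mod m) * 2 ^ a mod m"
    using a assms(1) by (simp add: mod_mod_cancel mod_mult_left_eq)
  also have "\<dots> = r * 2 ^ (k + a) mod m"
    using k by (simp add: mod_mult_left_eq power_add mult.assoc)
  finally show ?thesis
    unfolding cyc_coset_def by blast
qed

lemma cyc_coset_disjoint:
  assumes "coprime 2 n" "j < n" "j \<notin> cyc_coset n i"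
  shows "cyc_coset n i \<inter> cyc_coset n j = {}"
proof (rule ccontr)
  assume "cyc_coset n i \<inter> cyc_coset n j \<noteq> {}"
  then obtain a b where "i * 2 ^ a mod n = j * 2 ^ b mod n"
    unfolding cyc_coset_def by auto
  then have ab: "[j * 2 ^ b = i * 2 ^ a] (mod n)"
    by (simp add: cong_def)
  have "0 < totient n"
    using assms(2) by simp
  then obtain T where T: "totient n = Suc T"
    using gr0_conv_Suc by blast
  have "j * 2 ^ b * 2 ^ (T * b) = j * (2 ^ totient n) ^ b"
    by (simp add: T power_add mult.assoc flip: power_mult)
  also have "[\<dots> = j * 1 ^ b] (mod n)"
    using cong_scalar_left[OF cong_pow[OF euler_theorem[OF assms(1)]]] .
  finally have "[j = j * 2 ^ b * 2 ^ (T * b)] (mod n)"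
    by (simp add: cong_sym_eq)
  also have "[j * 2 ^ b * 2 ^ (T * b) = i * 2 ^ (a + T * b)] (mod n)"
    using cong_mult[OF ab cong_refl] by (simp add: power_add mult.assoc)
  finally have "j = i * 2 ^ (a + T * b) mod n"
    using assms(2) by (simp add: cong_def)
  then show False
    using assms(3) unfolding cyc_coset_def by blast
qed

section \<open>A codeword of weight three\<close>

lemma one_plus_prim_root_eq_power:
  fixes w :: "'a::field"
  assumes "CHAR('a) = 2" "2 ^ g = m + 1" "1 < m" "prim_root m w"
  shows "\<exists>e<m. w ^ e = 1 + w"
proof -
  have "0 < m"
    using assms(3) by simp
  have "w ^ m = 1" "w \<noteq> 1"
    using assms(3,4) by (auto simp: prim_root_def)
  then have nonzero: "1 + w \<noteq> 0"
    using CHAR_2_add_eq_0_iff[OF assms(1), of 1 w] by simp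
  have "(1 + w) ^ (2 ^ g) = 1 ^ (2 ^ g) + w ^ (2 ^ g)"
    by (rule CHAR_2_power_two_add[OF assms(1)])
  then have "(1 + w) ^ m * (1 + w) = 1 * (1 + w)"
    using \<open>w ^ m = 1\<close> assms(2) by simp
  then have "(1 + w) ^ m = 1"
    using nonzero mult_right_cancel by blast
  then obtain e where "e < m" "1 + w = w ^ e"
    using root_of_unity_eq_prim_root_power[OF assms(4) \<open>0 < m\<close>] by blast
  then show ?thesis
    by auto
qed

definition trinomial :: "nat \<Rightarrow> nat \<Rightarrow> 'a::comm_semiring_1 poly" where
  "trinomial a b = 1 + monom 1 a + monom 1 b"

lemma poly_trinomial: "poly (trinomial a b) x = 1 + x ^ a + x ^ b"
  by (simp add: trinomial_def poly_monom)

lemma coeff_trinomial: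
  assumes "0 < a" "a < b"
  shows "coeff (trinomial a b) k = (if k \<in> {0, a, b} then 1 else 0)"
  using assms by (auto simp: trinomial_def coeff_monom coeff_1)

lemma trinomial_properties:
  fixes a b :: nat
  assumes "0 < a" "a < b"
  shows "binary_poly (trinomial a b :: 'a::field poly)" "trinomial a b \<noteq> (0 :: 'a poly)"
    "degree (trinomial a b :: 'a poly) = b" "hweight (trinomial a b :: 'a poly) = 3"
proof -
  note coeff = coeff_trinomial[OF assms, where 'a = 'a]
  show "binary_poly (trinomial a b :: 'a poly)"
    by (simp add: binary_poly_def coeff)
  show "trinomial a b \<noteq> (0 :: 'a poly)"
    using coeff[of 0] by auto
  have "degree (trinomial a b :: 'a poly) \<le> b"
    using coeff assms by (intro degree_le) auto
  moreover have "b \<le> degree (trinomial a b :: 'a poly)"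
    using coeff by (intro le_degree) simp
  ultimately show "degree (trinomial a b :: 'a poly) = b"
    by (rule antisym)
  have "{k. coeff (trinomial a b :: 'a poly) k \<noteq> 0} = {0, a, b}"
    using coeff by auto
  then show "hweight (trinomial a b :: 'a poly) = 3"
    using assms by (simp add: hweight_def)
qed

lemma trinomial_root_on_cyc_coset:
  fixes \<beta> :: "'a::field"
  assumes "CHAR('a) = 2" "prim_root m \<beta>" "0 < m" "(\<beta> ^ r) ^ e = 1 + \<beta> ^ r"
    and "t mod m \<in> cyc_coset m r"
  shows "1 + \<beta> ^ t + (\<beta> ^ t) ^ e = 0"
proof -
  define w where "w = \<beta> ^ r"
  obtain k where "t mod m = r * 2 ^ k mod m"
    using assms(5) by (auto simp: cyc_coset_def)
  then have "\<beta> ^ t = w ^ 2 ^ k"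
    using prim_root_power_eq_iff[OF assms(2,3)] by (simp add: w_def cong_def flip: power_mult)
  then have "1 + \<beta> ^ t + (\<beta> ^ t) ^ e = 1 ^ 2 ^ k + w ^ 2 ^ k + (w ^ e) ^ 2 ^ k"
    by (simp add: mult.commute flip: power_mult)
  also have "\<dots> = (1 + w + w ^ e) ^ 2 ^ k"
    by (simp add: CHAR_2_power_two_add[OF assms(1)])
  also have "1 + w + w ^ e = 0"
    using assms(4) CHAR_2_add_eq_0_iff[OF assms(1), of "1 + w" "w ^ e"] by (simp add: w_def)
  finally show ?thesis
    by simp
qed

lemma weight_3_codeword_vanishing_on_coset:
  fixes \<alpha> :: "'a::field"
  assumes "CHAR('a) = 2" "prim_root n \<alpha>" "0 < n" "m dvd n" "1 < m" "2 ^ g = m + 1"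
    and "coprime m r"
  obtains c where "binary_poly c" "c \<noteq> 0" "degree c < n" "hweight c = 3"
    "\<And>t. t mod m \<in> cyc_coset m r \<Longrightarrow> poly c (\<alpha> ^ t) = 0"
proof -
  obtain s where "n = m * s"
    using assms(4) by blast
  then have "0 < s"
    using assms(3) by auto
  have "0 < m"
    using assms(5) by simp
  define \<beta> where "\<beta> = \<alpha> ^ s"
  have "prim_root m \<beta>"
    unfolding \<beta>_def using prim_root_power assms(2,3) \<open>n = m * s\<close> by blast
  then have "prim_root m (\<beta> ^ r)"
    using prim_root_power_coprime \<open>0 < m\<close> assms(7) by blast
  then obtain e where "e < m" and e: "(\<beta> ^ r) ^ e = 1 + \<beta> ^ r"
    using one_plus_prim_root_eq_power[OF assms(1,6,5)] by blast
  have "e \<noteq> 0"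
  proof
    assume "e = 0"
    then have "\<beta> ^ r = 0"
      using e by simp
    then show False
      using prim_root_nonzero[OF \<open>prim_root m (\<beta> ^ r)\<close> \<open>0 < m\<close>] by simp
  qed
  moreover have "e \<noteq> 1"
    using e by auto
  ultimately have "s < e * s" "e * s < n"
    using \<open>0 < s\<close> \<open>e < m\<close> \<open>n = m * s\<close> by auto
  let ?c = "trinomial s (e * s) :: 'a poly"
  show ?thesis
  proof
    show "binary_poly ?c" "?c \<noteq> 0" "hweight ?c = 3"
      using trinomial_properties[OF \<open>0 < s\<close> \<open>s < e * s\<close>] by simp_all
    show "degree ?c < n"
      using trinomial_properties(3)[OF \<open>0 < s\<close> \<open>s < e * s\<close>, where 'a = 'a] \<open>e * s < n\<close>
      by simp
    fix t
    assume "t mod m \<in> cyc_coset m r"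
    then have "1 + \<beta> ^ t + (\<beta> ^ t) ^ e = 0"
      using trinomial_root_on_cyc_coset[OF assms(1) \<open>prim_root m \<beta>\<close> _ e] assms(5) by simp
    then show "poly ?c (\<alpha> ^ t) = 0"
      by (simp add: poly_trinomial \<beta>_def flip: power_mult) (simp add: ac_simps)
  qed
qed

section \<open>Zeros of the generator polynomial\<close>

lemma prod_linear_factors_dvd:
  fixes c :: "'a::idom poly"
  assumes "finite A" "\<And>a. a \<in> A \<Longrightarrow> poly c a = 0"
  shows "(\<Prod>a\<in>A. [:-a, 1:]) dvd c"
  using assms
proof (induction A arbitrary: c rule: finite_induct)
  case empty
  then show ?case
    by simp
next
  case (insert a A)
  then obtain q where q: "c = [:-a, 1:] * q"
    by (metis insertI1 poly_eq_0_iff_dvd dvdE)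
  have "poly q b = 0" if "b \<in> A" for b
    using insert.hyps(2) insert.prems[of b] that q by auto
  then have "(\<Prod>a\<in>A. [:-a, 1:]) dvd q"
    using insert.IH by blast
  then have "[:-a, 1:] * (\<Prod>a\<in>A. [:-a, 1:]) dvd c"
    unfolding q by (rule mult_dvd_mono[OF dvd_refl])
  then show ?case
    using insert.hyps by simp
qed

lemma min_poly_mult_dvd:
  fixes \<alpha> :: "'a::field" and c :: "'a poly"
  assumes "prim_root n \<alpha>" "odd n" "j < n" "j \<notin> cyc_coset n i"
    and "\<And>t. t \<in> cyc_coset n i \<union> cyc_coset n j \<Longrightarrow> poly c (\<alpha> ^ t) = 0"
  shows "min_poly n \<alpha> i * min_poly n \<alpha> j dvd c"
proof -
  let ?U = "cyc_coset n i \<union> cyc_coset n j"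
  have "0 < n"
    using assms(3) by simp
  have "cyc_coset n i \<inter> cyc_coset n j = {}"
    using cyc_coset_disjoint assms(2-4) by simp
  then have "min_poly n \<alpha> i * min_poly n \<alpha> j = (\<Prod>t\<in>?U. [:-(\<alpha> ^ t), 1:])"
    unfolding min_poly_def using finite_cyc_coset[OF \<open>0 < n\<close>] by (simp add: prod.union_disjoint)
  also have "\<dots> = (\<Prod>a\<in>(\<lambda>t. \<alpha> ^ t) ` ?U. [:-a, 1:])"
    using inj_on_subset[OF inj_on_prim_root_power[OF assms(1) \<open>0 < n\<close>]]
      cyc_coset_subset[OF \<open>0 < n\<close>] by (simp add: prod.reindex)
  also have "\<dots> dvd c"
    using finite_cyc_coset[OF \<open>0 < n\<close>] assms(5) by (intro prod_linear_factors_dvd) auto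
  finally show ?thesis .
qed

lemma min_poly_dvd_imp_root:
  assumes "i < n" "min_poly n \<alpha> i dvd c"
  shows "poly c (\<alpha> ^ i) = 0"
proof -
  have "[:-(\<alpha> ^ i), 1:] dvd min_poly n \<alpha> i"
    unfolding min_poly_def using finite_cyc_coset self_in_cyc_coset assms(1)
    by (intro dvd_prodI) auto
  then show ?thesis
    using assms(2) dvd_trans poly_eq_0_iff_dvd by blast
qed

section \<open>Codewords of weight at most two\<close>

lemma coeff_support_subset_atMost_degree: "{k. coeff c k \<noteq> 0} \<subseteq> {..degree c}"
  by (auto intro: le_degree)

lemma finite_coeff_support: "finite {k. coeff c k \<noteq> 0}"
  using coeff_support_subset_atMost_degree finite_subset by blast

lemma poly_binary_poly:
  assumes "binary_poly c"
  shows "poly c x = (\<Sum>k | coeff c k \<noteq> 0. x ^ k)"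
proof -
  have "poly c x = (\<Sum>k\<le>degree c. coeff c k * x ^ k)"
    by (rule poly_altdef)
  also have "\<dots> = (\<Sum>k | coeff c k \<noteq> 0. coeff c k * x ^ k)"
    using coeff_support_subset_atMost_degree by (intro sum.mono_neutral_right) auto
  also have "\<dots> = (\<Sum>k | coeff c k \<noteq> 0. x ^ k)"
    using assms by (intro sum.cong) (auto simp: binary_poly_def)
  finally show ?thesis .
qed

lemma binary_binomial_root_dvd:
  fixes \<alpha> :: "'a::field"
  assumes "CHAR('a) = 2" "prim_root n \<alpha>" "0 < n" "binary_poly c"
    and "{k. coeff c k \<noteq> 0} = {a, b}" "a < b" "poly c (\<alpha> ^ l) = 0"
  shows "n dvd (b - a) * l"
proof -
  have "(\<alpha> ^ l) ^ a + (\<alpha> ^ l) ^ b = 0"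
    using assms(4-7) poly_binary_poly[of c "\<alpha> ^ l"] by simp
  then have "\<alpha> ^ (l * a) = \<alpha> ^ (l * b)"
    using CHAR_2_add_eq_0_iff[OF assms(1)] by (simp add: power_mult)
  then have "[l * b = l * a] (mod n)"
    using prim_root_power_eq_iff[OF assms(2,3)] cong_sym by blast
  then show ?thesis
    using assms(6) by (simp add: cong_altdef_nat diff_mult_distrib2 mult.commute)
qed

lemma dvd_of_dvd_mult_gcd_eq_1:
  fixes n d i j :: nat
  assumes "n dvd d * i" "n dvd d * j" "gcd n (gcd i j) = 1"
  shows "n dvd d"
proof -
  have "n dvd gcd (d * n) (gcd (d * i) (d * j))"
    using assms(1,2) by simp
  also have "\<dots> = d * gcd n (gcd i j)"
    by (simp add: gcd_mult_distrib_nat)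
  finally show ?thesis
    using assms(3) by simp
qed

lemma hweight_ge_3:
  fixes \<alpha> :: "'a::field"
  assumes "CHAR('a) = 2" "prim_root n \<alpha>" "binary_poly c" "c \<noteq> 0" "degree c < n"
    and "poly c (\<alpha> ^ i) = 0" "poly c (\<alpha> ^ j) = 0" "gcd n (gcd i j) = 1"
  shows "3 \<le> hweight c"
proof (rule ccontr)
  let ?K = "{k. coeff c k \<noteq> 0}"
  assume "\<not> 3 \<le> hweight c"
  then have "card ?K < 3"
    by (simp add: hweight_def)
  moreover have "degree c \<in> ?K"
    using assms(4) by simp
  then have "card ?K \<noteq> 0"
    using finite_coeff_support[of c] by (metis card_0_eq empty_iff)
  ultimately have "card ?K = 1 \<or> card ?K = 2"
    by linarith
  then consider "card ?K = 1" | "card ?K = 2"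
    by blast
  then show False
  proof cases
    case 1
    then obtain a where "?K = {a}"
      by (rule card_1_singletonE)
    then have "(\<alpha> ^ i) ^ a = 0"
      using assms(3,6) poly_binary_poly[of c "\<alpha> ^ i"] by simp
    moreover have "0 < n"
      using assms(5) by simp
    ultimately show False
      using prim_root_nonzero[OF assms(2)] by simp
  next
    case 2
    then obtain x y where "?K = {x, y}" "x \<noteq> y"
      by (auto simp: card_2_iff)
    define a b where "a = min x y" and "b = max x y"
    have K: "?K = {a, b}" and "a < b"
      using \<open>?K = {x, y}\<close> \<open>x \<noteq> y\<close> by (auto simp: a_def b_def min_def max_def)
    have "b \<le> degree c"
      using K by (intro le_degree) auto
    then have "b < n" "0 < n"
      using assms(5) by auto
    note binomial_root = binary_binomial_root_dvd[OF assms(1,2) \<open>0 < n\<close> assms(3) K \<open>a < b\<close>]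
    have "n dvd b - a"
      using dvd_of_dvd_mult_gcd_eq_1[OF binomial_root[OF assms(6)] binomial_root[OF assms(7)] assms(8)] .
    moreover have "0 < b - a" "b - a < n"
      using \<open>a < b\<close> \<open>b < n\<close> by auto
    ultimately show False
      using nat_dvd_not_less by blast
  qed
qed

lemma hweight_ge_3_of_mem_cyclic_code:
  fixes \<alpha> :: "'a::field"
  assumes "CHAR('a) = 2" "prim_root n \<alpha>" "i < n" "j < n" "gcd n (gcd i j) = 1"
    and "c \<in> cyclic_code n (min_poly n \<alpha> i * min_poly n \<alpha> j)" "c \<noteq> 0"
  shows "3 \<le> hweight c"
proof -
  have "binary_poly c" "degree c < n" and dvd: "min_poly n \<alpha> i * min_poly n \<alpha> j dvd c"
    using assms(6,7) unfolding cyclic_code_def by auto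
  moreover have "poly c (\<alpha> ^ i) = 0"
    using min_poly_dvd_imp_root[OF assms(3) dvd_mult_left[OF dvd]] .
  moreover have "poly c (\<alpha> ^ j) = 0"
    using min_poly_dvd_imp_root[OF assms(4) dvd_mult_right[OF dvd]] .
  ultimately show ?thesis
    using hweight_ge_3[OF assms(1,2) _ assms(7) _ _ _ assms(5)] by simp
qed

lemma min_dist_le_hweight:
  assumes "c \<in> C" "c \<noteq> 0"
  shows "min_dist C \<le> hweight c"
  unfolding min_dist_def using assms by (intro cInf_lower) auto

lemma le_min_dist:
  assumes "c \<in> C" "c \<noteq> 0" "\<And>c. c \<in> C \<Longrightarrow> c \<noteq> 0 \<Longrightarrow> d \<le> hweight c"
  shows "d \<le> min_dist C"
  unfolding min_dist_def using assms by (intro cInf_greatest) auto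

theorem lemma2:
  fixes \<alpha> :: "'a::field" and n i j g r :: nat
  assumes "CHAR('a) = 2"
    and "odd n" and "n > 0"
    and "prim_root n \<alpha>"
    and "i < j" and "j \<le> n - 1"
    and "j \<notin> cyc_coset n i"
    and "g > 0" and "(2 ^ g - 1) dvd n"
    and "0 < r" and "r < 2 ^ g - 1" and "coprime r (2 ^ g - 1)"
    and "i mod (2 ^ g - 1) \<in> cyc_coset (2 ^ g - 1) r"
    and "j mod (2 ^ g - 1) \<in> cyc_coset (2 ^ g - 1) r"
  shows "min_dist (cyclic_code n (min_poly n \<alpha> i * min_poly n \<alpha> j)) \<le> 3
    \<and> (gcd n (gcd i j) = 1 \<longrightarrow>
         min_dist (cyclic_code n (min_poly n \<alpha> i * min_poly n \<alpha> j)) = 3)"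
proof -
  define m :: nat where "m = 2 ^ g - 1"
  define C where "C = cyclic_code n (min_poly n \<alpha> i * min_poly n \<alpha> j)"
  have "2 ^ g = m + 1" "1 < m" "m dvd n" "coprime m r"
    using assms(9-12) by (simp_all add: m_def coprime_commute)
  have "j < n" "i < n"
    using assms(3,5,6) by linarith+
  obtain c where c: "binary_poly c" "c \<noteq> 0" "degree c < n" "hweight c = 3"
    and vanish: "\<And>t. t mod m \<in> cyc_coset m r \<Longrightarrow> poly c (\<alpha> ^ t) = 0"
    using weight_3_codeword_vanishing_on_coset[OF assms(1,4,3) \<open>m dvd n\<close> \<open>1 < m\<close>
        \<open>2 ^ g = m + 1\<close> \<open>coprime m r\<close>] by blast
  have "min_poly n \<alpha> i * min_poly n \<alpha> j dvd c"
    using min_poly_mult_dvd[OF assms(4,2) \<open>j < n\<close> assms(7)] vanish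
      cyc_coset_mod_dvd[OF \<open>m dvd n\<close>] assms(13,14) unfolding m_def by blast
  then have "c \<in> C"
    using c unfolding C_def cyclic_code_def by blast
  have "min_dist C \<le> 3"
    using min_dist_le_hweight[OF \<open>c \<in> C\<close> c(2)] c(4) by simp
  moreover have "3 \<le> min_dist C" if "gcd n (gcd i j) = 1"
  proof (rule le_min_dist[OF \<open>c \<in> C\<close> c(2)])
    fix c'
    assume "c' \<in> C" "c' \<noteq> 0"
    then show "3 \<le> hweight c'"
      unfolding C_def by (rule hweight_ge_3_of_mem_cyclic_code[OF assms(1,4) \<open>i < n\<close> \<open>j < n\<close> that])
  qed
  ultimately show ?thesis
    unfolding C_def by simp
qed

end
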